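(* Let $k\ge2$ and let $\mathcal{H}\subset\mathbb{CP}^3$ be an essential arrangement of $2k$ planes such that every plane in $\mathcal{H}$ meets the other planes of $\mathcal{H}$ along exactly $k+1$ distinct lines. Then $\mathcal{H}$ is a Hirzebruch arrangement.
   Context: An arrangement is a finite set of distinct hyperplanes; it is essential if the common intersection of its members is empty. $\mathcal{L}$ is the set of non-empty proper intersections of members and $m_L$ the number of members containing $L$. An essential arrangement $\mathcal{H}\subset\mathbb{CP}^n$ is Hirzebruch if (H1) $m_L/\operatorname{codim}L\le|\mathcal{H}|/(n+1)$ for all $L\in\mathcal{L}$, and (H2) every $H\in\mathcal{H}$ meets the members of $\mathcal{H}\setminus\{H\}$ along exactly $\big(1-\frac{2}{n+1}\big)|\mathcal{H}|+1$ distinct codimension-2 subspaces. *)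

theory Defs
  imports "HOL-Analysis.Analysis"
begin

text \<open>Projective space P(K^N) with K = complex and N = CARD('n), i.e. CP^n with n = CARD('n) - 1.
  A projective subspace is represented by the corresponding linear subspace of complex^'n;
  the empty projective subspace corresponds to the zero subspace {0}.
  Codimension in P(K^N) equals codimension of the linear subspace in K^N.\<close>

definition proj_hyperplane :: "(complex^'n) set \<Rightarrow> bool" where
  "proj_hyperplane H \<longleftrightarrow> (\<exists>a::complex^'n. a \<noteq> 0 \<and> H = {x. (\<Sum>i\<in>UNIV. a$i * x$i) = 0})"

definition arrangement :: "(complex^'n) set set \<Rightarrow> bool" where
  "arrangement A \<longleftrightarrow> finite A \<and> (\<forall>H\<in>A. proj_hyperplane H)"

definition essential :: "(complex^'n) set set \<Rightarrow> bool" where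
  "essential A \<longleftrightarrow> \<Inter>A = {0}"

definition lcodim :: "(complex^'n) set \<Rightarrow> nat" where
  "lcodim L = CARD('n) - vec.dim L"

definition flats :: "(complex^'n) set set \<Rightarrow> (complex^'n) set set" where
  "flats A = {L. \<exists>S. S \<subseteq> A \<and> S \<noteq> {} \<and> L = \<Inter>S \<and> L \<noteq> {0} \<and> L \<noteq> UNIV}"

definition mult :: "(complex^'n) set set \<Rightarrow> (complex^'n) set \<Rightarrow> nat" where
  "mult A L = card {H\<in>A. L \<subseteq> H}"

definition trace_lines :: "(complex^'n) set set \<Rightarrow> (complex^'n) set \<Rightarrow> (complex^'n) set set" where
  "trace_lines A H = {L. \<exists>H'\<in>A - {H}. L = H \<inter> H' \<and> lcodim L = 2}"

definition hirzebruch :: "(complex^'n) set set \<Rightarrow> bool" where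
  "hirzebruch A \<longleftrightarrow> arrangement A \<and> essential A \<and>
     (\<forall>L\<in>flats A. real (mult A L) / real (lcodim L) \<le> real (card A) / real CARD('n)) \<and>
     (\<forall>H\<in>A. real (card (trace_lines A H)) = (1 - 2 / real CARD('n)) * real (card A) + 1)"

end

theory Submission
  imports Defs
begin

text \<open>Everything reduces to counting the hyperplanes through a flat \<open>L\<close> of \<open>\<complex>\<P>\<^sup>3\<close>.
  A plane lies in only itself. Through a line \<open>L \<subseteq> H\<close> pass at most \<open>k\<close> planes, because the
  planes through \<open>L\<close> all cut \<open>H\<close> in the single line \<open>L\<close>, while \<open>H\<close> meets the others in
  \<open>k + 1\<close> lines. Through a point \<open>L\<close> pass at most \<open>k + 1\<close> planes, since by essentiality
  some plane \<open>H\<^sub>0\<close> misses \<open>L\<close>, and distinct planes through \<open>L\<close> cut \<open>H\<^sub>0\<close> in distinct lines.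
  These bounds give (H1); (H2) is the hypothesis itself, as \<open>(1 - 2/4) \<cdot> 2k + 1 = k + 1\<close>.\<close>

lemma proj_hyperplane_subspace:
  fixes H :: "(complex^'n) set"
  assumes "proj_hyperplane H"
  shows "vec.subspace H"
proof -
  obtain a :: "complex^'n" where "H = {x. (\<Sum>i\<in>UNIV. a$i * x$i) = 0}"
    using assms unfolding proj_hyperplane_def by blast
  then show ?thesis unfolding vec.subspace_def
    by (auto simp: sum.distrib distrib_left sum_distrib_left[symmetric] mult.left_commute)
qed

lemma dim_proj_hyperplane:
  fixes H :: "(complex^'n) set"
  assumes "proj_hyperplane H"
  shows "vec.dim H + 1 = CARD('n)"
proof -
  obtain a :: "complex^'n" where "a \<noteq> 0" and H: "H = {x. (\<Sum>i\<in>UNIV. a$i * x$i) = 0}"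
    using assms unfolding proj_hyperplane_def by blast
  define f where "f x = (\<Sum>i\<in>UNIV. a$i * (x::complex^'n)$i)" for x
  have H_f: "H = {x. f x = 0}" using H f_def by auto
  have f_scale: "f (c *s x) = c * f x" for x c
    by (simp add: f_def sum_distrib_left algebra_simps)
  have f_diff: "f (x - y) = f x - f y" for x y
    by (simp add: f_def sum_subtractf algebra_simps)
  obtain i where "a$i \<noteq> 0" using \<open>a \<noteq> 0\<close> by (metis vec_eq_iff zero_index)
  define v :: "complex^'n" where "v = axis i (1 / a$i)"
  have fv: "f v = 1"
    using \<open>a$i \<noteq> 0\<close> by (simp add: f_def v_def axis_def if_distrib cong: if_cong)
  then have "v \<noteq> 0" by (auto simp: f_def)
  define V where "V = vec.span {v}"
  have sub_H: "vec.subspace H" and sub_V: "vec.subspace V"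
    using assms proj_hyperplane_subspace V_def by auto
  have "x - f x *s v \<in> H" and "f x *s v \<in> V" for x
    using f_diff[of x] f_scale[of "f x" v] fv by (auto simp: H_f V_def vec.span_singleton)
  moreover have "x = (x - f x *s v) + f x *s v" for x by simp
  ultimately have sums: "{x + y |x y. x \<in> H \<and> y \<in> V} = UNIV" by blast
  have "x = 0" if "x \<in> H" "x \<in> V" for x
    using that f_scale fv by (auto simp: H_f V_def vec.span_singleton)
  then have "H \<inter> V = {0}" using sub_H sub_V vec.subspace_0 by blast
  moreover have "vec.dim V = 1" unfolding V_def using \<open>v \<noteq> 0\<close> by (simp add: vec.dim_span)
  ultimately show ?thesis
    using vec.dim_sums_Int[OF sub_H sub_V] sums vec_dim_card[where 'a=complex and 'n='n] by simp
qed

lemma dim_Int_proj_hyperplanes: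
  fixes H H' :: "(complex^'n) set"
  assumes "proj_hyperplane H" "proj_hyperplane H'" "H \<noteq> H'"
  shows "vec.dim (H \<inter> H') + 2 = CARD('n)"
proof -
  have sub: "vec.subspace H" "vec.subspace H'"
    using assms proj_hyperplane_subspace by auto
  have dim: "vec.dim H + 1 = CARD('n)" "vec.dim H' + 1 = CARD('n)"
    using assms dim_proj_hyperplane by auto
  define S where "S = {x + y |x y. x \<in> H \<and> y \<in> H'}"
  have sub_S: "vec.subspace S" unfolding S_def using vec.subspace_sums sub by blast
  have "H \<subseteq> S" "H' \<subseteq> S"
    unfolding S_def using sub vec.subspace_0
    by (metis (mono_tags, lifting) add.right_neutral add.left_neutral mem_Collect_eq subsetI)+
  have "vec.dim S \<noteq> vec.dim H"
    using vec.subspace_dim_equal[OF sub(1) sub_S \<open>H \<subseteq> S\<close>]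
      vec.subspace_dim_equal[OF sub(2) sub_S \<open>H' \<subseteq> S\<close>] dim assms(3) by fastforce
  moreover have "vec.dim H \<le> vec.dim S" using vec.dim_subset[OF \<open>H \<subseteq> S\<close>] .
  moreover have "vec.dim S \<le> CARD('n)" by (rule dim_subset_UNIV_cart_gen)
  ultimately have "vec.dim S = CARD('n)" using dim by linarith
  with vec.dim_sums_Int[OF sub] dim show ?thesis unfolding S_def by linarith
qed

lemma lcodim_Int_proj_hyperplanes:
  assumes "proj_hyperplane H" "proj_hyperplane H'" "H \<noteq> H'"
  shows "lcodim (H \<inter> H') = 2"
  using dim_Int_proj_hyperplanes[OF assms] unfolding lcodim_def by linarith

lemma
  fixes A :: "(complex^'n) set set"
  assumes "arrangement A" "L \<in> flats A"
  shows flat_subspace: "vec.subspace L"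
    and flat_dim_pos: "0 < vec.dim L"
    and flat_dim_less: "vec.dim L < CARD('n)"
    and flat_subset_member: "\<exists>H\<in>A. L \<subseteq> H"
proof -
  obtain S where S: "S \<subseteq> A" "S \<noteq> {}" "L = \<Inter>S" "L \<noteq> {0}" "L \<noteq> UNIV"
    using assms(2) unfolding flats_def by blast
  have "\<forall>H\<in>S. vec.subspace H"
    using S(1) assms(1) proj_hyperplane_subspace unfolding arrangement_def by blast
  then show sub_L: "vec.subspace L" unfolding S(3) by (rule vec.subspace_Inter)
  have "\<not> L \<subseteq> {0}" using S(4) sub_L vec.subspace_0 by blast
  then show "0 < vec.dim L" by (metis vec.dim_eq_0 gr0I)
  have "vec.dim L \<noteq> CARD('n)"
  proof
    assume "vec.dim L = CARD('n)"
    then have "L = UNIV"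
      using vec.subspace_dim_equal[OF sub_L vec.subspace_UNIV subset_UNIV]
        vec_dim_card[where 'a=complex and 'n='n] by simp
    with S(5) show False ..
  qed
  then show "vec.dim L < CARD('n)" using dim_subset_UNIV_cart_gen[of L] by linarith
  show "\<exists>H\<in>A. L \<subseteq> H" using S by blast
qed

lemma essential_flat_not_subset:
  fixes A :: "(complex^'n) set set"
  assumes "essential A" "arrangement A" "L \<in> flats A"
  shows "\<exists>H\<in>A. \<not> L \<subseteq> H"
proof (rule ccontr)
  assume "\<not> ?thesis"
  then have "L \<subseteq> {0}" using assms(1) unfolding essential_def by blast
  then have "vec.dim L = 0" by (simp only: vec.dim_eq_0)
  with flat_dim_pos[OF assms(2,3)] show False by simp
qed

lemma mult_le_one_if_dim_hyperplane:
  fixes A :: "(complex^'n) set set"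
  assumes "arrangement A" "vec.subspace L" "vec.dim L + 1 = CARD('n)"
  shows "mult A L \<le> 1"
proof -
  have "H = L" if "H \<in> A" "L \<subseteq> H" for H
  proof -
    have "proj_hyperplane H" using assms(1) that(1) unfolding arrangement_def by blast
    moreover from this have "vec.dim H \<le> vec.dim L"
      using dim_proj_hyperplane assms(3) by fastforce
    ultimately show ?thesis
      using vec.subspace_dim_equal[OF assms(2) proj_hyperplane_subspace that(2)] by simp
  qed
  then have "card {H\<in>A. L \<subseteq> H} \<le> card {L}" by (intro card_mono) auto
  then show ?thesis unfolding mult_def by simp
qed

text \<open>The members through \<open>L\<close> all meet \<open>H\<close> in \<open>L\<close> itself, so they contribute at most
  one trace line of \<open>H\<close>.\<close>
lemma card_trace_lines_add_mult_le:
  assumes "arrangement A" "H \<in> A" "L \<subseteq> H" "vec.subspace L" "lcodim L = 2"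
  shows "card (trace_lines A H) + mult A L \<le> card A + 1"
proof -
  define P where "P = {H'\<in>A. L \<subseteq> H'}"
  have fin: "finite A" and hyp: "\<And>H'. H' \<in> A \<Longrightarrow> proj_hyperplane H'"
    using assms(1) unfolding arrangement_def by auto
  have "X = L" if "X = H \<inter> H'" "H' \<in> P" "H' \<noteq> H" "lcodim X = 2" for X H'
  proof (rule vec.subspace_dim_equal[symmetric])
    show "vec.subspace X"
      unfolding that(1) using that(2) assms(2) hyp P_def
      by (intro vec.subspace_inter proj_hyperplane_subspace) auto
    show "L \<subseteq> X" using that assms(3) P_def by auto
    show "vec.dim X \<le> vec.dim L"
      using that assms(5) dim_subset_UNIV_cart_gen[of X] dim_subset_UNIV_cart_gen[of L]
      unfolding lcodim_def by linarith
  qed (use assms(4) in simp)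
  then have "trace_lines A H \<subseteq> insert L ((\<inter>) H ` (A - P))"
    unfolding trace_lines_def P_def by blast
  then have "card (trace_lines A H) \<le> card (insert L ((\<inter>) H ` (A - P)))"
    using fin by (intro card_mono) auto
  also have "\<dots> \<le> Suc (card (A - P))"
    using fin card_image_le[of "A - P" "(\<inter>) H"] by (simp add: card_insert_if)
  also have "card (A - P) = card A - card P"
    using fin unfolding P_def by (intro card_Diff_subset) auto
  finally have "card (trace_lines A H) \<le> Suc (card A - card P)" .
  moreover have "card P \<le> card A" using fin unfolding P_def by (intro card_mono) auto
  ultimately show ?thesis unfolding mult_def P_def[symmetric] by linarith
qed

text \<open>Injectivity: if \<open>H\<^sub>0 \<inter> H\<^sub>1 = H\<^sub>0 \<inter> H\<^sub>2\<close>, this plane of codimension 2 lies in, hence equals,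
  \<open>H\<^sub>1 \<inter> H\<^sub>2 \<supseteq> L\<close>, forcing \<open>L \<subseteq> H\<^sub>0\<close>.\<close>
lemma mult_le_card_trace_lines:
  assumes "arrangement A" "H\<^sub>0 \<in> A" "\<not> L \<subseteq> H\<^sub>0"
  shows "mult A L \<le> card (trace_lines A H\<^sub>0)"
proof -
  define P where "P = {H\<in>A. L \<subseteq> H}"
  have fin: "finite A" and hyp: "\<And>H. H \<in> A \<Longrightarrow> proj_hyperplane H"
    using assms(1) unfolding arrangement_def by auto
  have sub: "\<And>H. H \<in> A \<Longrightarrow> vec.subspace H" using hyp proj_hyperplane_subspace by blast
  have "inj_on ((\<inter>) H\<^sub>0) P"
  proof
    fix H\<^sub>1 H\<^sub>2 assume H12: "H\<^sub>1 \<in> P" "H\<^sub>2 \<in> P" "H\<^sub>0 \<inter> H\<^sub>1 = H\<^sub>0 \<inter> H\<^sub>2"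
    show "H\<^sub>1 = H\<^sub>2"
    proof (rule ccontr)
      assume "H\<^sub>1 \<noteq> H\<^sub>2"
      have in_A: "H\<^sub>1 \<in> A" "H\<^sub>2 \<in> A" and "H\<^sub>0 \<noteq> H\<^sub>1" using H12 assms(3) P_def by auto
      have "H\<^sub>0 \<inter> H\<^sub>1 = H\<^sub>1 \<inter> H\<^sub>2"
      proof (rule vec.subspace_dim_equal)
        show "vec.subspace (H\<^sub>0 \<inter> H\<^sub>1)" "vec.subspace (H\<^sub>1 \<inter> H\<^sub>2)"
          using sub in_A assms(2) vec.subspace_inter by auto
        show "H\<^sub>0 \<inter> H\<^sub>1 \<subseteq> H\<^sub>1 \<inter> H\<^sub>2" using H12(3) by blast
        show "vec.dim (H\<^sub>1 \<inter> H\<^sub>2) \<le> vec.dim (H\<^sub>0 \<inter> H\<^sub>1)"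
          using dim_Int_proj_hyperplanes hyp in_A assms(2) \<open>H\<^sub>1 \<noteq> H\<^sub>2\<close> \<open>H\<^sub>0 \<noteq> H\<^sub>1\<close>
          by (metis add_right_cancel order_refl)
      qed
      then show False using H12 assms(3) P_def by blast
    qed
  qed
  moreover have "(\<inter>) H\<^sub>0 ` P \<subseteq> trace_lines A H\<^sub>0"
    using assms(2,3) hyp lcodim_Int_proj_hyperplanes unfolding trace_lines_def P_def by blast
  moreover have "finite (trace_lines A H\<^sub>0)"
    using fin by (auto simp: trace_lines_def intro: finite_subset[OF _ finite_imageI])
  ultimately show ?thesis
    unfolding mult_def P_def[symmetric] by (metis card_image card_mono)
qed

lemma mult_flat_bound:
  fixes A :: "(complex^4) set set"
  assumes "k \<ge> 2" "arrangement A" "essential A" "card A = 2 * k"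
    and trace: "\<forall>H\<in>A. card (trace_lines A H) = k + 1"
    and L: "L \<in> flats A"
  shows "4 * mult A L \<le> 2 * k * lcodim L"
proof -
  have sub_L: "vec.subspace L" and "0 < vec.dim L" "vec.dim L < 4"
    using flat_subspace[OF assms(2) L] flat_dim_pos[OF assms(2) L] flat_dim_less[OF assms(2) L]
    by simp_all
  then consider "vec.dim L = 3" | "vec.dim L = 2" | "vec.dim L = 1" by linarith
  then show ?thesis
  proof cases
    case 1
    then have "mult A L \<le> 1" using mult_le_one_if_dim_hyperplane[OF assms(2) sub_L] by simp
    with 1 show ?thesis using assms(1) by (simp add: lcodim_def)
  next
    case 2
    then have "lcodim L = 2" by (simp add: lcodim_def)
    moreover obtain H where "H \<in> A" "L \<subseteq> H" using flat_subset_member[OF assms(2) L] by blast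
    ultimately have "card (trace_lines A H) + mult A L \<le> card A + 1"
      using card_trace_lines_add_mult_le[OF assms(2) _ _ sub_L] by blast
    then have "mult A L \<le> k" using trace \<open>H \<in> A\<close> assms(4) by simp
    with \<open>lcodim L = 2\<close> show ?thesis by simp
  next
    case 3
    obtain H\<^sub>0 where "H\<^sub>0 \<in> A" "\<not> L \<subseteq> H\<^sub>0"
      using essential_flat_not_subset[OF assms(3,2) L] by blast
    then have "mult A L \<le> k + 1" using mult_le_card_trace_lines[OF assms(2)] trace by metis
    with 3 show ?thesis using assms(1) by (simp add: lcodim_def)
  qed
qed

theorem lemma6p12:
  fixes A :: "(complex^4) set set" and k :: nat
  assumes "k \<ge> 2"
    and "arrangement A"
    and "essential A"
    and "card A = 2 * k"
    and "\<forall>H\<in>A. card (trace_lines A H) = k + 1"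
  shows "hirzebruch A"
  unfolding hirzebruch_def
proof (intro conjI ballI)
  fix L assume L: "L \<in> flats A"
  have "lcodim L > 0"
    using flat_dim_less[OF assms(2) L] by (simp add: lcodim_def)
  moreover have "real (4 * mult A L) \<le> real (2 * k * lcodim L)"
    using mult_flat_bound[OF assms L] by linarith
  ultimately show "real (mult A L) / real (lcodim L) \<le> real (card A) / real CARD(4)"
    using assms(4) by (simp add: divide_simps)
qed (use assms in auto)

end
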